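(* Consider the decentralized Bayesian bandit algorithm described in the context with Gaussian rewards of known variance $\sigma^2$, learning rate $\eta>0$ and prior $\mathcal N(\mu_0,\sigma_0^2)$ on the mean of every arm at every agent. Define $\mu^{(i)}_k(1)=\mu_0$, $\sigma^{(i)}_k(1)=\sigma_0$ and, for $t\ge1$, \[ \tilde\sigma^{(i)}_k(t+1)=\left(\frac{1}{(\sigma^{(i)}_k(t))^2}+\frac{\eta\mathbf 1\{A^{(i)}_t=k\}}{\sigma^2}\right)^{-1/2}, \] \[ \tilde\mu^{(i)}_k(t+1)=\mu^{(i)}_k(t)\left(\frac{\tilde\sigma^{(i)}_k(t+1)}{\sigma^{(i)}_k(t)}\right)^2+\eta Y^{(i)}_t\mathbf 1\{A^{(i)}_t=k\}\left(\frac{\tilde\sigma^{(i)}_k(t+1)}{\sigma}\right)^2, \] \[ \frac{1}{(\sigma^{(i)}_k(t+1))^2}=\sum_{j=1}^N W_{ij}\frac{1}{(\tilde\sigma^{(j)}_k(t+1))^2},\qquad \frac{\mu^{(i)}_k(t+1)}{(\sigma^{(i)}_k(t+1))^2}=\sum_{j=1}^N W_{ij}\frac{\tilde\mu^{(j)}_k(t+1)}{(\tilde\sigma^{(j)}_k(t+1))^2}. \] Then for all $t\ge1$, $i\in[N]$, $k\in[K]$: $\tilde q^{(i)}_{k,t+1}$ is the density of $\mathcal N(\tilde\mu^{(i)}_k(t+1),(\tilde\sigma^{(i)}_k(t+1))^2)$ and $q^{(i)}_{k,t+1}$ is the density of $\mathcal N(\mu^{(i)}_k(t+1),(\sigma^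{(i)}_k(t+1))^2)$.
   Context: $N$ agents; $W\in\mathbb R^{N\times N}$ is a doubly stochastic matrix with nonnegative entries (respecting a connected undirected communication graph). $K$ arms; when agent $i$ plays arm $k$ it observes a reward drawn from $\mathcal N(\theta^*_k,\sigma^2)$ with $\sigma^2$ known. Let $p_\theta$ be the $\mathcal N(\theta,\sigma^2)$ density, $\Theta=\mathbb R$ with Lebesgue measure. Decentralized Bayesian bandit algorithm: each agent $i$ maintains densities $q^{(i)}_{k,t}$, $k\in[K]$, with $q^{(i)}_{k,1}$ equal to the prior density. In round $t$, agent $i$ selects an arm $A^{(i)}_t$ as a function of $(q^{(i)}_{1,t},\dots,q^{(i)}_{K,t})$, observes reward $Y^{(i)}_t$, and forms the tempered posterior $\tilde q^{(i)}_{k,t+1}(\theta)=\frac{q^{(i)}_{k,t}(\theta)p_\theta(Y^{(i)}_t)^\eta}{\int_\Theta q^{(i)}_{k,t}(\phi)p_\phi(Y^{(i)}_t)^\eta d\phi}$ for $k=A^{(i)}_t$, and $\tilde q^{(i)}_{k,t+1}=q^{(i)}_{k,t}$ for $k\neq A^{(i)}_t$. After exchanging with neighbors, each agent sets $q^{(i)}_{k,t+1}(\theta)=\frac{\exp(\sum_{j=1}^N W_{ij}\log\tilde q^{(j)}_{k,t+1}(\theta))}{\int_\Theta\exp(\sum_{j=1}^N W_{ij}\log\tilde q^{(j)}_{k,t+1}(\phi))d\phi}$ for all $k$. *)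

theory Defs
  imports "HOL-Analysis.Analysis" "HOL-Probability.Probability"
begin

text \<open>Agents are indexed by 0..N-1, arms by 0..K-1, rounds by t = 1, 2, ...\<close>

definition temper :: "real \<Rightarrow> real \<Rightarrow> (real \<Rightarrow> real) \<Rightarrow> real \<Rightarrow> real \<Rightarrow> real" where
  "temper \<sigma> \<eta> q y \<theta> =
     q \<theta> * (normal_density \<theta> \<sigma> y) powr \<eta> /
     (LINT \<phi>|lborel. q \<phi> * (normal_density \<phi> \<sigma> y) powr \<eta>)"

definition consensus :: "nat \<Rightarrow> (nat \<Rightarrow> nat \<Rightarrow> real) \<Rightarrow> nat \<Rightarrow> (nat \<Rightarrow> real \<Rightarrow> real) \<Rightarrow> real \<Rightarrow> real" where
  "consensus N W i qs \<theta> =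
     exp (\<Sum>j<N. W i j * ln (qs j \<theta>)) /
     (LINT \<phi>|lborel. exp (\<Sum>j<N. W i j * ln (qs j \<phi>)))"

definition local_step :: "real \<Rightarrow> real \<Rightarrow> (nat \<Rightarrow> nat \<Rightarrow> nat) \<Rightarrow> (nat \<Rightarrow> nat \<Rightarrow> real)
    \<Rightarrow> (nat \<Rightarrow> nat \<Rightarrow> real \<Rightarrow> real) \<Rightarrow> nat \<Rightarrow> nat \<Rightarrow> nat \<Rightarrow> real \<Rightarrow> real" where
  "local_step \<sigma> \<eta> A Y qcur t i k =
     (if A i t = k then temper \<sigma> \<eta> (qcur i k) (Y i t) else qcur i k)"

text \<open>dbb_q N W \<sigma> \<eta> prior A Y t i k is the density q^{(i)}_{k,t} (t \<ge> 1; the value at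
  t = 0 is an unused dummy). A i t is the arm played by agent i in round t and Y i t
  the reward it observed.\<close>
primrec dbb_q :: "nat \<Rightarrow> (nat \<Rightarrow> nat \<Rightarrow> real) \<Rightarrow> real \<Rightarrow> real \<Rightarrow> (real \<Rightarrow> real)
    \<Rightarrow> (nat \<Rightarrow> nat \<Rightarrow> nat) \<Rightarrow> (nat \<Rightarrow> nat \<Rightarrow> real) \<Rightarrow> nat \<Rightarrow> nat \<Rightarrow> nat \<Rightarrow> real \<Rightarrow> real" where
  "dbb_q N W \<sigma> \<eta> prior A Y 0 = (\<lambda>i k. prior)"
| "dbb_q N W \<sigma> \<eta> prior A Y (Suc t) =
     (if t = 0 then (\<lambda>i k. prior)
      else (\<lambda>i k. consensus N W i
                    (\<lambda>j. local_step \<sigma> \<eta> A Y (dbb_q N W \<sigma> \<eta> prior A Y t) t j k)))"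

definition dbb_qt :: "nat \<Rightarrow> (nat \<Rightarrow> nat \<Rightarrow> real) \<Rightarrow> real \<Rightarrow> real \<Rightarrow> (real \<Rightarrow> real)
    \<Rightarrow> (nat \<Rightarrow> nat \<Rightarrow> nat) \<Rightarrow> (nat \<Rightarrow> nat \<Rightarrow> real) \<Rightarrow> nat \<Rightarrow> nat \<Rightarrow> nat \<Rightarrow> real \<Rightarrow> real" where
  "dbb_qt N W \<sigma> \<eta> prior A Y t1 i k =
     local_step \<sigma> \<eta> A Y (dbb_q N W \<sigma> \<eta> prior A Y (t1 - 1)) (t1 - 1) i k"

definition indic :: "bool \<Rightarrow> real" where
  "indic b = (if b then 1 else 0)"

end

theory Submission
  imports Defs
begin

text \<open>The log-density of a Gaussian is a concave quadratic whose leading coefficient is minus half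
  the precision 1/s^2 and whose linear coefficient is the precision-weighted mean m/s^2.
  Tempering and geometric consensus both replace the log-density by a linear combination of
  Gaussian log-densities, which is again such a quadratic; after normalisation it is therefore the
  Gaussian whose precision and precision-weighted mean are the same linear combinations.
  These are exactly the recursions for sigt, mut and sig, mu, so induction over the rounds
  proves the claim.\<close>

lemma normal_density_cong_square:
  "s\<^sup>2 = s'\<^sup>2 \<Longrightarrow> normal_density m s = normal_density m s'"
  by (simp add: normal_density_def fun_eq_iff)

lemma normal_density_commute: "normal_density m s x = normal_density x s m"
  by (simp add: normal_density_def power2_commute)

lemma normal_density_pos_nonzero:
  assumes "s \<noteq> 0"
  shows "0 < normal_density m s x"
  using normal_density_pos[of "\<bar>s\<bar>" m x] normal_density_cong_square[of "\<bar>s\<bar>" s m] assms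
  by simp

lemma ln_normal_density:
  assumes "s \<noteq> 0"
  shows "ln (normal_density m s x)
    = -(1 / s\<^sup>2) / 2 * x\<^sup>2 + m / s\<^sup>2 * x - (m\<^sup>2 / (2 * s\<^sup>2) + ln (sqrt (2 * pi * s\<^sup>2)))"
proof -
  have "ln (normal_density m s x) = - ln (sqrt (2 * pi * s\<^sup>2)) - (x - m)\<^sup>2 / (2 * s\<^sup>2)"
    using assms by (simp add: normal_density_def ln_mult ln_div)
  also have "\<dots> = -(1 / s\<^sup>2) / 2 * x\<^sup>2 + m / s\<^sup>2 * x
      - (m\<^sup>2 / (2 * s\<^sup>2) + ln (sqrt (2 * pi * s\<^sup>2)))"
    using assms by (simp add: power2_diff field_simps)
  finally show ?thesis .
qed

lemma normalized_exp_quadratic_eq_normal_density: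
  fixes f :: "real \<Rightarrow> real"
  assumes s: "s \<noteq> 0"
    and f: "\<And>x. f x = exp (-(1 / s\<^sup>2) / 2 * x\<^sup>2 + m / s\<^sup>2 * x + c)"
  shows "f x / (LINT y|lborel. f y) = normal_density m s x"
proof -
  define C where "C = exp (c + m\<^sup>2 / (2 * s\<^sup>2)) * sqrt (2 * pi * s\<^sup>2)"
  have "C > 0"
    using s by (simp add: C_def)
  have f_eq: "f y = C * normal_density m s y" for y
  proof -
    have "-(1 / s\<^sup>2) / 2 * y\<^sup>2 + m / s\<^sup>2 * y + c = (c + m\<^sup>2 / (2 * s\<^sup>2)) + -(y - m)\<^sup>2 / (2 * s\<^sup>2)"
      using s by (simp add: power2_diff field_simps)
    then have "f y = exp (c + m\<^sup>2 / (2 * s\<^sup>2)) * exp (-(y - m)\<^sup>2 / (2 * s\<^sup>2))"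
      by (simp add: f flip: exp_add)
    then show ?thesis
      using s by (simp add: C_def normal_density_def)
  qed
  have "(LINT y|lborel. normal_density m s y) = 1"
    using s normal_density_cong_square[of "\<bar>s\<bar>" s m] integral_normal_density[of "\<bar>s\<bar>" m] by simp
  then have "(LINT y|lborel. f y) = C"
    by (simp add: f_eq)
  then show ?thesis
    using f_eq \<open>C > 0\<close> by simp
qed

lemma temper_normal_density:
  assumes s: "s \<noteq> 0" and \<sigma>: "\<sigma> > 0" and s': "s' \<noteq> 0"
    and prec: "1 / s'\<^sup>2 = 1 / s\<^sup>2 + \<eta> / \<sigma>\<^sup>2"
    and mean: "m' / s'\<^sup>2 = m / s\<^sup>2 + \<eta> * y / \<sigma>\<^sup>2"
  shows "temper \<sigma> \<eta> (normal_density m s) y = normal_density m' s'"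
proof
  fix \<theta>
  define c where "c = -(m\<^sup>2 / (2 * s\<^sup>2) + ln (sqrt (2 * pi * s\<^sup>2)))
      - \<eta> * (y\<^sup>2 / (2 * \<sigma>\<^sup>2) + ln (sqrt (2 * pi * \<sigma>\<^sup>2)))"
  define f where "f \<phi> = normal_density m s \<phi> * normal_density \<phi> \<sigma> y powr \<eta>" for \<phi>
  have "ln (normal_density m s \<phi>) + \<eta> * ln (normal_density y \<sigma> \<phi>)
      = -(1 / s\<^sup>2 + \<eta> / \<sigma>\<^sup>2) / 2 * \<phi>\<^sup>2 + (m / s\<^sup>2 + \<eta> * y / \<sigma>\<^sup>2) * \<phi> + c" for \<phi>
    unfolding ln_normal_density[OF s] ln_normal_density[OF less_imp_neq[OF \<sigma>, symmetric]] c_def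
    by (simp add: algebra_simps add_divide_distrib diff_divide_distrib)
  moreover have "f \<phi> = exp (ln (normal_density m s \<phi>) + \<eta> * ln (normal_density y \<sigma> \<phi>))" for \<phi>
    using s \<sigma> normal_density_pos_nonzero[of s m \<phi>] normal_density_pos[of \<sigma> \<phi> y]
    by (simp add: f_def powr_def exp_add normal_density_commute[of \<phi> \<sigma> y])
  ultimately have f: "f \<phi> = exp (-(1 / s'\<^sup>2) / 2 * \<phi>\<^sup>2 + m' / s'\<^sup>2 * \<phi> + c)" for \<phi>
    by (simp add: prec mean)
  show "temper \<sigma> \<eta> (normal_density m s) y \<theta> = normal_density m' s' \<theta>"
    unfolding temper_def f_def[symmetric] by (rule normalized_exp_quadratic_eq_normal_density[OF s' f])
qed

lemma consensus_normal_density: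
  assumes s: "\<And>j. j < N \<Longrightarrow> s j \<noteq> 0"
    and qs: "\<And>j. j < N \<Longrightarrow> qs j = normal_density (m j) (s j)"
    and s': "s' \<noteq> 0"
    and prec: "1 / s'\<^sup>2 = (\<Sum>j<N. W i j * (1 / (s j)\<^sup>2))"
    and mean: "m' / s'\<^sup>2 = (\<Sum>j<N. W i j * (m j / (s j)\<^sup>2))"
  shows "consensus N W i qs = normal_density m' s'"
proof
  fix \<theta>
  define c where "c = (\<Sum>j<N. W i j * -((m j)\<^sup>2 / (2 * (s j)\<^sup>2) + ln (sqrt (2 * pi * (s j)\<^sup>2))))"
  define f where "f \<phi> = exp (\<Sum>j<N. W i j * ln (qs j \<phi>))" for \<phi>
  have "(\<Sum>j<N. W i j * ln (qs j \<phi>))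
      = (\<Sum>j<N. -(W i j * (1 / (s j)\<^sup>2)) / 2 * \<phi>\<^sup>2 + W i j * (m j / (s j)\<^sup>2) * \<phi>
          + W i j * -((m j)\<^sup>2 / (2 * (s j)\<^sup>2) + ln (sqrt (2 * pi * (s j)\<^sup>2))))" for \<phi>
    by (intro sum.cong) (simp_all add: qs s ln_normal_density algebra_simps)
  also have "\<dots> \<phi> = -(1 / s'\<^sup>2) / 2 * \<phi>\<^sup>2 + m' / s'\<^sup>2 * \<phi> + c" for \<phi>
    by (simp add: prec mean c_def sum.distrib sum_distrib_right sum_divide_distrib sum_negf sum_subtractf)
  finally have f: "f \<phi> = exp (-(1 / s'\<^sup>2) / 2 * \<phi>\<^sup>2 + m' / s'\<^sup>2 * \<phi> + c)" for \<phi>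
    by (simp add: f_def)
  show "consensus N W i qs \<theta> = normal_density m' s' \<theta>"
    unfolding consensus_def f_def[symmetric] by (rule normalized_exp_quadratic_eq_normal_density[OF s' f])
qed

lemma sum_weighted_pos:
  fixes w a :: "'a \<Rightarrow> real"
  assumes w_sum: "(\<Sum>j\<in>I. w j) > 0" and w: "\<And>j. j \<in> I \<Longrightarrow> w j \<ge> 0"
    and a: "\<And>j. j \<in> I \<Longrightarrow> a j > 0"
  shows "(\<Sum>j\<in>I. w j * a j) > 0"
proof -
  have "finite I"
    using w_sum sum.infinite by force
  obtain j where "j \<in> I" "w j > 0"
    using w_sum w sum_nonpos[of I w] by (meson not_le)
  then show ?thesis
    using \<open>finite I\<close> w a by (intro sum_pos2[of I j]) (auto intro: mult_nonneg_nonneg less_imp_le)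
qed

lemma local_step_normal_density:
  assumes q: "qcur i k = normal_density m s" and s: "s \<noteq> 0"
    and \<sigma>: "\<sigma> > 0" and \<eta>: "\<eta> \<ge> 0"
    and s': "s' = (1 / s\<^sup>2 + \<eta> * indic (A i t = k) / \<sigma>\<^sup>2) powr (-1/2)"
    and m': "m' = m * (s' / s)\<^sup>2 + \<eta> * Y i t * indic (A i t = k) * (s' / \<sigma>)\<^sup>2"
  shows "s' \<noteq> 0 \<and> local_step \<sigma> \<eta> A Y qcur t i k = normal_density m' s'"
proof -
  define P where "P = 1 / s\<^sup>2 + \<eta> * indic (A i t = k) / \<sigma>\<^sup>2"
  have "P > 0"
    using s \<sigma> \<eta> by (simp add: P_def indic_def add_pos_nonneg)
  then have "s'\<^sup>2 = 1 / P"
    by (simp add: s' P_def[symmetric] powr_minus_divide powr_half_sqrt power_divide)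
  then have "s' \<noteq> 0" and prec: "1 / s'\<^sup>2 = P"
    using \<open>P > 0\<close> by auto
  have mean: "m' / s'\<^sup>2 = m / s\<^sup>2 + \<eta> * Y i t * indic (A i t = k) / \<sigma>\<^sup>2"
    using \<open>s' \<noteq> 0\<close> s \<sigma> by (simp add: m' power_divide field_simps)
  show ?thesis
  proof (cases "A i t = k")
    case True
    have "temper \<sigma> \<eta> (normal_density m s) (Y i t) = normal_density m' s'"
      using s \<sigma> \<open>s' \<noteq> 0\<close> prec mean True
      by (intro temper_normal_density) (simp_all add: P_def indic_def)
    then show ?thesis
      using True \<open>s' \<noteq> 0\<close> by (simp add: local_step_def q)
  next
    case False
    then have "s'\<^sup>2 = s\<^sup>2"
      using \<open>s'\<^sup>2 = 1 / P\<close> by (simp add: P_def indic_def)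
    then have "m' = m"
      using False s by (simp add: m' indic_def power_divide)
    then show ?thesis
      using False \<open>s' \<noteq> 0\<close> \<open>s'\<^sup>2 = s\<^sup>2\<close> normal_density_cong_square[of s' s m]
      by (simp add: local_step_def q)
  qed
qed

lemma dbb_qt_Suc:
  "dbb_qt N W \<sigma> \<eta> prior A Y (t + 1) i k
    = local_step \<sigma> \<eta> A Y (dbb_q N W \<sigma> \<eta> prior A Y t) t i k"
  by (simp add: dbb_qt_def)

lemma dbb_q_Suc:
  "1 \<le> t \<Longrightarrow> dbb_q N W \<sigma> \<eta> prior A Y (t + 1) i k
    = consensus N W i (\<lambda>j. dbb_qt N W \<sigma> \<eta> prior A Y (t + 1) j k)"
  by (simp add: dbb_qt_def)

lemma dbb_round_normal_density:
  assumes t: "1 \<le> t" and \<sigma>: "\<sigma> > 0" and \<eta>: "\<eta> \<ge> 0"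
    and W_nonneg: "\<And>i j. i < N \<Longrightarrow> j < N \<Longrightarrow> W i j \<ge> 0"
    and W_rows: "\<And>i. i < N \<Longrightarrow> (\<Sum>j<N. W i j) = 1"
    and q: "\<And>j. j < N \<Longrightarrow> s j \<noteq> 0 \<and> dbb_q N W \<sigma> \<eta> prior A Y t j k = normal_density (m j) (s j)"
    and st: "\<And>j. j < N \<Longrightarrow> st j = (1 / (s j)\<^sup>2 + \<eta> * indic (A j t = k) / \<sigma>\<^sup>2) powr (-1/2)"
    and mt: "\<And>j. j < N \<Longrightarrow> mt j = m j * (st j / s j)\<^sup>2 + \<eta> * Y j t * indic (A j t = k) * (st j / \<sigma>)\<^sup>2"
    and s': "\<And>i. i < N \<Longrightarrow> 1 / (s' i)\<^sup>2 = (\<Sum>j<N. W i j * (1 / (st j)\<^sup>2))"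
    and m': "\<And>i. i < N \<Longrightarrow> m' i / (s' i)\<^sup>2 = (\<Sum>j<N. W i j * (mt j / (st j)\<^sup>2))"
    and i: "i < N"
  shows "st i \<noteq> 0 \<and> dbb_qt N W \<sigma> \<eta> prior A Y (t + 1) i k = normal_density (mt i) (st i)"
    and "s' i \<noteq> 0 \<and> dbb_q N W \<sigma> \<eta> prior A Y (t + 1) i k = normal_density (m' i) (s' i)"
proof -
  have tempered: "st j \<noteq> 0 \<and> dbb_qt N W \<sigma> \<eta> prior A Y (t + 1) j k = normal_density (mt j) (st j)"
    if "j < N" for j
    unfolding dbb_qt_Suc
    by (rule local_step_normal_density[where m = "m j" and s = "s j"])
      (use q[OF that] \<sigma> \<eta> st[OF that] mt[OF that] in auto)
  then show "st i \<noteq> 0 \<and> dbb_qt N W \<sigma> \<eta> prior A Y (t + 1) i k = normal_density (mt i) (st i)"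
    using i .
  have "1 / (s' i)\<^sup>2 > 0"
    unfolding s'[OF i] using tempered W_nonneg[OF i] W_rows[OF i]
    by (intro sum_weighted_pos) auto
  then have "s' i \<noteq> 0"
    by auto
  moreover have "dbb_q N W \<sigma> \<eta> prior A Y (t + 1) i k = normal_density (m' i) (s' i)"
    unfolding dbb_q_Suc[OF t] using tempered
    by (intro consensus_normal_density[where s = st and m = mt] \<open>s' i \<noteq> 0\<close> s'[OF i] m'[OF i]) auto
  ultimately show "s' i \<noteq> 0 \<and> dbb_q N W \<sigma> \<eta> prior A Y (t + 1) i k = normal_density (m' i) (s' i)" ..
qed

theorem lemma2:
  fixes N K :: nat
    and W :: "nat \<Rightarrow> nat \<Rightarrow> real"
    and E :: "nat \<Rightarrow> nat \<Rightarrow> bool"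
    and \<sigma> \<eta> \<mu>0 \<sigma>0 :: real
    and A :: "nat \<Rightarrow> nat \<Rightarrow> nat" and Y :: "nat \<Rightarrow> nat \<Rightarrow> real"
    and mu sig mut sigt :: "nat \<Rightarrow> nat \<Rightarrow> nat \<Rightarrow> real"
  assumes W_nonneg: "\<And>i j. i < N \<Longrightarrow> j < N \<Longrightarrow> W i j \<ge> 0"
    and W_rows: "\<And>i. i < N \<Longrightarrow> (\<Sum>j<N. W i j) = 1"
    and W_cols: "\<And>j. j < N \<Longrightarrow> (\<Sum>i<N. W i j) = 1"
    and E_sym: "\<And>i j. E i j \<Longrightarrow> E j i"
    and W_graph: "\<And>i j. i < N \<Longrightarrow> j < N \<Longrightarrow> i \<noteq> j \<Longrightarrow> W i j \<noteq> 0 \<Longrightarrow> E i j"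
    and E_conn: "\<And>i j. i < N \<Longrightarrow> j < N \<Longrightarrow> (\<lambda>a b. a < N \<and> b < N \<and> E a b)\<^sup>*\<^sup>* i j"
    and \<sigma>_pos: "\<sigma> > 0" and \<eta>_pos: "\<eta> > 0" and \<sigma>0_pos: "\<sigma>0 > 0"
    and mu1: "\<And>i k. mu i k 1 = \<mu>0"
    and sig1: "\<And>i k. sig i k 1 = \<sigma>0"
    and sigt_def: "\<And>t i k. t \<ge> 1 \<Longrightarrow> i < N \<Longrightarrow> k < K \<Longrightarrow>
        sigt i k (t + 1) = (1 / (sig i k t)\<^sup>2 + \<eta> * indic (A i t = k) / \<sigma>\<^sup>2) powr (-1/2)"
    and mut_def: "\<And>t i k. t \<ge> 1 \<Longrightarrow> i < N \<Longrightarrow> k < K \<Longrightarrow>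
        mut i k (t + 1) = mu i k t * (sigt i k (t + 1) / sig i k t)\<^sup>2
                          + \<eta> * Y i t * indic (A i t = k) * (sigt i k (t + 1) / \<sigma>)\<^sup>2"
    and sig_def: "\<And>t i k. t \<ge> 1 \<Longrightarrow> i < N \<Longrightarrow> k < K \<Longrightarrow>
        1 / (sig i k (t + 1))\<^sup>2 = (\<Sum>j<N. W i j * (1 / (sigt j k (t + 1))\<^sup>2))"
    and mu_def: "\<And>t i k. t \<ge> 1 \<Longrightarrow> i < N \<Longrightarrow> k < K \<Longrightarrow>
        mu i k (t + 1) / (sig i k (t + 1))\<^sup>2 = (\<Sum>j<N. W i j * (mut j k (t + 1) / (sigt j k (t + 1))\<^sup>2))"
  shows "\<forall>t \<ge> 1. \<forall>i < N. \<forall>k < K.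
           dbb_qt N W \<sigma> \<eta> (normal_density \<mu>0 \<sigma>0) A Y (t + 1) i k
             = normal_density (mut i k (t + 1)) (sigt i k (t + 1))
         \<and> dbb_q N W \<sigma> \<eta> (normal_density \<mu>0 \<sigma>0) A Y (t + 1) i k
             = normal_density (mu i k (t + 1)) (sig i k (t + 1))"
proof -
  let ?q = "dbb_q N W \<sigma> \<eta> (normal_density \<mu>0 \<sigma>0) A Y"
  let ?qt = "dbb_qt N W \<sigma> \<eta> (normal_density \<mu>0 \<sigma>0) A Y"
  have round: "(sigt i k (t + 1) \<noteq> 0 \<and> ?qt (t + 1) i k = normal_density (mut i k (t + 1)) (sigt i k (t + 1)))
      \<and> (sig i k (t + 1) \<noteq> 0 \<and> ?q (t + 1) i k = normal_density (mu i k (t + 1)) (sig i k (t + 1)))"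
    if "1 \<le> t" "k < K" "i < N"
      and "\<And>j. j < N \<Longrightarrow> sig j k t \<noteq> 0 \<and> ?q t j k = normal_density (mu j k t) (sig j k t)"
    for t k i
    using dbb_round_normal_density[where s = "\<lambda>j. sig j k t" and m = "\<lambda>j. mu j k t"
      and st = "\<lambda>j. sigt j k (t + 1)" and mt = "\<lambda>j. mut j k (t + 1)"
      and s' = "\<lambda>i. sig i k (t + 1)" and m' = "\<lambda>i. mu i k (t + 1)",
      OF that(1) \<sigma>_pos less_imp_le[OF \<eta>_pos] W_nonneg W_rows that(4)
         sigt_def[OF that(1) _ that(2)] mut_def[OF that(1) _ that(2)]
         sig_def[OF that(1) _ that(2)] mu_def[OF that(1) _ that(2)] that(3)]
    by blast
  have invariant: "\<forall>i<N. \<forall>k<K. sig i k t \<noteq> 0 \<and> ?q t i k = normal_density (mu i k t) (sig i k t)"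
    if "1 \<le> t" for t
    using that
  proof (induction t rule: dec_induct)
    case base
    then show ?case
      using mu1 sig1 \<sigma>0_pos by simp
  next
    case (step t)
    then show ?case
      unfolding Suc_eq_plus1 using round by blast
  qed
  show ?thesis
    using round invariant by blast
qed

end
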